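(* Let $\tilde U(\mathbf v,d)=V(\mathbf v,d)\setminus\{[1,0,0],[0,1,0],[0,0,1]\}$. Then the closure of $\beta(\tilde U(\mathbf v,d))$ is contained in $HC_F(\mathbf v,d)$, and $\beta$ restricts to a rational map $\beta:V(\mathbf v,d)\dashrightarrow HC_F(\mathbf v,d)$.
   Context: On $\mathbb{C}P^4$ use homogeneous coordinates $[w_0,w_1,w_2,w_3,x_1]$; let $Y$ be the surface $w_0w_3-w_1w_2=0$, $x_1^2+w_0w_3=0$. For parameters $[\mathbf v,d]=[v_{11},v_{12},v_{21},v_{22},d]\in\mathbb{C}P^4$ (complex, not all zero) set $a_1=v_{11}-v_{21}-d$, $a_2=-v_{11}-v_{21}+d$, $a_3=v_{11}+v_{21}+d$, $a_4=-v_{11}+v_{21}-d$, and let $HC_F(\mathbf v,d)$ be the set of points of $Y$ satisfying $2\big(v_{22}(w_3-w_0)-v_{12}(w_2-w_1)\big)x_1+a_1w_0w_1+a_2w_0w_2+a_3w_1w_3+a_4w_2w_3=0$. On $\mathbb{C}P^2$ with coordinates $[u_0,u_1,u_2]$ let $V(\mathbf v,d)$ be the curve $P=0$ with $P=a_4u_2^4+2(v_{22}u_0-v_{12}u_1)u_2^3-(a_3u_0^2+a_2u_1^2)u_2^2+2u_0u_1(v_{22}u_1-v_{12}u_0)u_2+a_1u_0^2u_1^2$. Define the rational map $\beta:\mathbb{C}P^2\dashrightarrow Y$, $\beta([u_0,u_1,u_2])=[-u_0u_1^2,-u_0^2u_1,u_1u_2^2,u_0u_2^2,u_0u_1u_2]$,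 which is defined away from $[1,0,0],[0,1,0],[0,0,1]$. *)

theory Defs
  imports "HOL-Analysis.Analysis"
begin

text \<open>Projective sets are represented by their affine cones (sets of nonzero homogeneous
coordinate vectors, invariant under nonzero complex scaling). Points of CP^4 are given by
vectors in C^5 (coordinates (w0,w1,w2,w3,x1)), points of CP^2 by vectors in C^3 (u0,u1,u2).\<close>

type_synonym c5 = "complex \<times> complex \<times> complex \<times> complex \<times> complex"
type_synonym c3 = "complex \<times> complex \<times> complex"

text \<open>Closure in projective space (classical topology), expressed on cones: for a
scaling-invariant set S of nonzero vectors, the cone over the closure of the projectivisation
of S is closure S minus the origin (the projection C^(n+1)-{0} to CP^n is an open quotient map).\<close>
definition pcl :: "'a::real_normed_vector set \<Rightarrow> 'a set" where
  "pcl S = closure S - {0}"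

definition Ycone :: "c5 set" where
  "Ycone = {(w0,w1,w2,w3,x1). (w0,w1,w2,w3,x1) \<noteq> 0 \<and>
              w0*w3 - w1*w2 = 0 \<and> x1^2 + w0*w3 = 0}"

definition a1 :: "complex \<Rightarrow> complex \<Rightarrow> complex \<Rightarrow> complex" where
  "a1 v11 v21 d = v11 - v21 - d"
definition a2 :: "complex \<Rightarrow> complex \<Rightarrow> complex \<Rightarrow> complex" where
  "a2 v11 v21 d = - v11 - v21 + d"
definition a3 :: "complex \<Rightarrow> complex \<Rightarrow> complex \<Rightarrow> complex" where
  "a3 v11 v21 d = v11 + v21 + d"
definition a4 :: "complex \<Rightarrow> complex \<Rightarrow> complex \<Rightarrow> complex" where
  "a4 v11 v21 d = - v11 + v21 - d"

definition HCF :: "complex \<Rightarrow> complex \<Rightarrow> complex \<Rightarrow> complex \<Rightarrow> complex \<Rightarrow> c5 set" where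
  "HCF v11 v12 v21 v22 d = {(w0,w1,w2,w3,x1). (w0,w1,w2,w3,x1) \<in> Ycone \<and>
      2 * (v22*(w3 - w0) - v12*(w2 - w1)) * x1 + a1 v11 v21 d * w0 * w1
      + a2 v11 v21 d * w0 * w2 + a3 v11 v21 d * w1 * w3 + a4 v11 v21 d * w2 * w3 = 0}"

definition Ppoly :: "complex \<Rightarrow> complex \<Rightarrow> complex \<Rightarrow> complex \<Rightarrow> complex \<Rightarrow> c3 \<Rightarrow> complex" where
  "Ppoly v11 v12 v21 v22 d = (\<lambda>(u0,u1,u2).
      a4 v11 v21 d * u2^4 + 2 * (v22*u0 - v12*u1) * u2^3
      - (a3 v11 v21 d * u0^2 + a2 v11 v21 d * u1^2) * u2^2
      + 2 * u0 * u1 * (v22*u1 - v12*u0) * u2 + a1 v11 v21 d * u0^2 * u1^2)"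

definition Vcone :: "complex \<Rightarrow> complex \<Rightarrow> complex \<Rightarrow> complex \<Rightarrow> complex \<Rightarrow> c3 set" where
  "Vcone v11 v12 v21 v22 d = {u. u \<noteq> 0 \<and> Ppoly v11 v12 v21 v22 d u = 0}"

definition coord_pts :: "c3 set" where
  "coord_pts = {u. \<exists>t. t \<noteq> 0 \<and> (u = (t,0,0) \<or> u = (0,t,0) \<or> u = (0,0,t))}"

definition Ucone :: "complex \<Rightarrow> complex \<Rightarrow> complex \<Rightarrow> complex \<Rightarrow> complex \<Rightarrow> c3 set" where
  "Ucone v11 v12 v21 v22 d = Vcone v11 v12 v21 v22 d - coord_pts"

definition beta :: "c3 \<Rightarrow> c5" where
  "beta = (\<lambda>(u0,u1,u2). (- (u0*u1^2), - (u0^2*u1), u1*u2^2, u0*u2^2, u0*u1*u2))"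

end

theory Submission imports Defs begin

(* In coordinates, \<beta>(u) satisfies the two quadrics defining Y identically, and the remaining
   quadric of HC_F pulls back to u0 u1 P(u).  Hence \<beta> maps V into the closed zero set of the
   equations of HC_F, and so does the closure of the image; \<beta>(u) \<noteq> 0 off the coordinate points.

   For V \<subseteq> closure U it remains to approach each coordinate point lying on V by points of V
   off the coordinate points.  In an affine chart around such a point, P restricted to a suitable
   pencil of lines is quadratic in one variable y, with coefficients depending on the line
   parameter s and converging, as s \<rightarrow> 0, to a quadratic that has 0 as a root but does not
   vanish identically; a root y(s) \<rightarrow> 0 then gives the approximating curve.  In the remaining
   degenerate cases V contains a coordinate line through the point.  Swapping u0 and u1 maps
   V(v11,v12,v21,v22,d) onto V(-v21,-v22,-v11,-v12,d), which reduces [0,1,0] to [1,0,0]. *)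

lemma quadratic_formula_root:
  fixes c2 c1 c0 w :: complex
  assumes "c2 \<noteq> 0" "w^2 = c1^2 - 4*c2*c0"
  shows "c2 * ((- c1 + w) / (2*c2))^2 + c1 * ((- c1 + w) / (2*c2)) + c0 = 0"
proof -
  have "4*c2 * (c2 * ((- c1 + w) / (2*c2))^2 + c1 * ((- c1 + w) / (2*c2)) + c0)
     = (w - c1)^2 + 2*c1*(w-c1) + 4*c2*c0"
    using assms(1) by (simp add: field_simps power2_eq_square)
  also have "\<dots> = 0" using assms(2) by (simp add: algebra_simps power2_eq_square)
  finally show ?thesis using assms(1) by simp
qed

lemma quadratic_root_norm_le:
  fixes c2 c1 c0 :: complex
  assumes "c1 \<noteq> 0"
  shows "\<exists>y. c2 * y^2 + c1 * y + c0 = 0 \<and> norm y \<le> 2 * norm c0 / norm c1"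
proof -
  (* choose the square root w of the discriminant with Re (w * cnj c1) \<ge> 0, so |c1 + w| \<ge> |c1| *)
  obtain w where w2: "w^2 = c1^2 - 4*c2*c0" and wre: "Re w * Re c1 + Im w * Im c1 \<ge> 0"
  proof (cases "Re (csqrt (c1^2 - 4*c2*c0)) * Re c1 + Im (csqrt (c1^2 - 4*c2*c0)) * Im c1 \<ge> 0")
    case True then show ?thesis using that[of "csqrt (c1^2 - 4*c2*c0)"] by simp
  next
    case False then show ?thesis using that[of "- csqrt (c1^2 - 4*c2*c0)"] by simp
  qed
  have "(cmod (c1+w))^2 = (cmod c1)^2 + ((Re w)^2 + (Im w)^2) + 2*(Re w * Re c1 + Im w * Im c1)"
    by (simp only: cmod_power2) (simp add: power2_eq_square algebra_simps)
  hence "(cmod c1)^2 \<le> (cmod (c1 + w))^2"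
    using wre zero_le_power2[of "Re w"] zero_le_power2[of "Im w"] by (smt (verit))
  hence le: "cmod c1 \<le> cmod (c1 + w)" by (rule power2_le_imp_le) simp
  have nz: "c1 + w \<noteq> 0" using le assms by auto
  define y where "y = - 2 * c0 / (c1 + w)"
  have yq: "y * (c1 + w) = - 2 * c0" using nz unfolding y_def by simp
  have "(c1 + w)^2 * (c2 * y^2 + c1 * y + c0)
      = c2 * (y * (c1+w))^2 + c1 * (y*(c1+w)) * (c1+w) + c0 * (c1+w)^2"
    by (simp add: algebra_simps power2_eq_square)
  also have "\<dots> = c0 * (4*c2*c0 - c1^2 + w^2)"
    unfolding yq by (simp add: algebra_simps power2_eq_square)
  also have "\<dots> = 0" using w2 by simp
  finally have root: "c2 * y^2 + c1 * y + c0 = 0" using nz by simp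
  have "norm y = 2 * norm c0 / norm (c1 + w)" unfolding y_def by (simp add: norm_divide norm_mult)
  also have "\<dots> \<le> 2 * norm c0 / norm c1"
    using le assms nz by (intro divide_left_mono) auto
  finally show ?thesis using root by blast
qed

lemma quadratic_root_tendsto_zero_simple:
  fixes c2 c1 c0 :: "'a \<Rightarrow> complex"
  assumes "(c1 \<longlongrightarrow> B) F" "B \<noteq> 0" "(c0 \<longlongrightarrow> 0) F"
  shows "\<exists>x. (x \<longlongrightarrow> 0) F \<and> eventually (\<lambda>s. c2 s * (x s)^2 + c1 s * x s + c0 s = 0) F"
proof -
  have "\<forall>s. \<exists>y. c1 s \<noteq> 0 \<longrightarrow>
      c2 s * y^2 + c1 s * y + c0 s = 0 \<and> norm y \<le> 2 * norm (c0 s) / norm (c1 s)"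
    using quadratic_root_norm_le by blast
  then obtain x where x: "\<And>s. c1 s \<noteq> 0 \<Longrightarrow>
      c2 s * (x s)^2 + c1 s * x s + c0 s = 0 \<and> norm (x s) \<le> 2 * norm (c0 s) / norm (c1 s)"
    by metis
  have ev: "eventually (\<lambda>s. c1 s \<noteq> 0) F"
    using assms(1,2) tendsto_imp_eventually_ne by blast
  have "((\<lambda>s. 2 * norm (c0 s) / norm (c1 s)) \<longlongrightarrow> 2 * norm (0::complex) / norm B) F"
    using assms by (intro tendsto_intros) auto
  then have bound: "((\<lambda>s. 2 * norm (c0 s) / norm (c1 s)) \<longlongrightarrow> 0) F" by simp
  have "eventually (\<lambda>s. norm (x s) \<le> 2 * norm (c0 s) / norm (c1 s)) F"
    using ev by (rule eventually_mono) (use x in blast)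
  then have "(x \<longlongrightarrow> 0) F" using bound by (rule Lim_null_comparison)
  moreover have "eventually (\<lambda>s. c2 s * (x s)^2 + c1 s * x s + c0 s = 0) F"
    using ev by (rule eventually_mono) (use x in blast)
  ultimately show ?thesis by blast
qed

lemma quadratic_root_tendsto_zero_double:
  fixes c2 c1 c0 :: "'a \<Rightarrow> complex"
  assumes "(c2 \<longlongrightarrow> A) F" "A \<noteq> 0" "(c1 \<longlongrightarrow> 0) F" "(c0 \<longlongrightarrow> 0) F"
  shows "\<exists>x. (x \<longlongrightarrow> 0) F \<and> eventually (\<lambda>s. c2 s * (x s)^2 + c1 s * x s + c0 s = 0) F"
proof -
  define w where "w s = csqrt (c1 s ^2 - 4 * c2 s * c0 s)" for s
  have "((\<lambda>s. c1 s ^2 - 4 * c2 s * c0 s) \<longlongrightarrow> 0) F"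
    using assms by (auto intro!: tendsto_eq_intros)
  hence "((\<lambda>s. sqrt (norm (c1 s ^2 - 4 * c2 s * c0 s))) \<longlongrightarrow> sqrt (norm (0::complex))) F"
    by (intro tendsto_intros)
  hence "((\<lambda>s. norm (w s)) \<longlongrightarrow> 0) F" by (simp add: w_def)
  hence "(w \<longlongrightarrow> 0) F" by (simp add: tendsto_norm_zero_iff)
  hence "((\<lambda>s. (- c1 s + w s) / (2 * c2 s)) \<longlongrightarrow> (- 0 + 0) / (2 * A)) F"
    using assms by (intro tendsto_intros) auto
  moreover have "eventually (\<lambda>s. c2 s \<noteq> 0) F"
    using assms(1,2) tendsto_imp_eventually_ne by blast
  hence "eventually (\<lambda>s. c2 s * ((- c1 s + w s) / (2 * c2 s))^2
                        + c1 s * ((- c1 s + w s) / (2 * c2 s)) + c0 s = 0) F"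
    by (rule eventually_mono) (rule quadratic_formula_root, auto simp: w_def)
  ultimately show ?thesis by (intro exI[of _ "\<lambda>s. (- c1 s + w s) / (2 * c2 s)"]) simp
qed

lemma quadratic_root_tendsto_zero:
  fixes c2 c1 c0 :: "'a \<Rightarrow> complex"
  assumes "(c2 \<longlongrightarrow> A) F" "(c1 \<longlongrightarrow> B) F" "(c0 \<longlongrightarrow> 0) F" "A \<noteq> 0 \<or> B \<noteq> 0"
  shows "\<exists>x. (x \<longlongrightarrow> 0) F \<and> eventually (\<lambda>s. c2 s * (x s)^2 + c1 s * x s + c0 s = 0) F"
proof (cases "B = 0")
  case True
  then show ?thesis using assms by (intro quadratic_root_tendsto_zero_double[of c2 A]) auto
next
  case False
  then show ?thesis using assms by (intro quadratic_root_tendsto_zero_simple[of c1 B]) auto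
qed

definition hcf_form :: "complex \<Rightarrow> complex \<Rightarrow> complex \<Rightarrow> complex \<Rightarrow> complex \<Rightarrow> c5 \<Rightarrow> complex" where
  "hcf_form v11 v12 v21 v22 d = (\<lambda>(w0,w1,w2,w3,x1).
      2 * (v22*(w3 - w0) - v12*(w2 - w1)) * x1 + a1 v11 v21 d * w0 * w1
      + a2 v11 v21 d * w0 * w2 + a3 v11 v21 d * w1 * w3 + a4 v11 v21 d * w2 * w3)"

definition Y_zero_set :: "c5 set" where
  "Y_zero_set = {(w0,w1,w2,w3,x1). w0*w3 - w1*w2 = 0 \<and> x1^2 + w0*w3 = 0}"

lemma closed_Y_zero_set: "closed Y_zero_set"
  unfolding Y_zero_set_def case_prod_unfold
  by (intro closed_Collect_conj closed_Collect_eq continuous_intros)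

lemma continuous_on_hcf_form: "continuous_on S (hcf_form v11 v12 v21 v22 d)"
  unfolding hcf_form_def case_prod_unfold by (intro continuous_intros)

lemma closed_hcf_zero_set: "closed {z \<in> Y_zero_set. hcf_form v11 v12 v21 v22 d z = 0}"
  using closed_Y_zero_set
  by (intro closed_Collect_conj closed_Collect_eq continuous_on_hcf_form) auto

lemma HCF_eq: "HCF v11 v12 v21 v22 d = {z \<in> Y_zero_set. hcf_form v11 v12 v21 v22 d z = 0} - {0}"
  by (auto simp: HCF_def Ycone_def Y_zero_set_def hcf_form_def)

lemma beta_in_Y_zero_set: "beta u \<in> Y_zero_set"
  by (cases u) (simp add: beta_def Y_zero_set_def algebra_simps power2_eq_square)

lemma hcf_form_beta:
  "hcf_form v11 v12 v21 v22 d (beta (u0,u1,u2)) = u0 * u1 * Ppoly v11 v12 v21 v22 d (u0,u1,u2)"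
  by (simp add: hcf_form_def beta_def Ppoly_def algebra_simps eval_nat_numeral)

lemma beta_Vcone_subset:
  "beta ` Vcone v11 v12 v21 v22 d \<subseteq> {z \<in> Y_zero_set. hcf_form v11 v12 v21 v22 d z = 0}"
  by (force simp: Vcone_def beta_in_Y_zero_set hcf_form_beta)

lemma beta_nonzero: "u \<noteq> 0 \<Longrightarrow> u \<notin> coord_pts \<Longrightarrow> beta u \<noteq> 0"
  by (cases u) (auto simp: beta_def zero_prod_def coord_pts_def)

lemma not_coord_pts: "a \<noteq> 0 \<Longrightarrow> b \<noteq> 0 \<or> c \<noteq> 0 \<Longrightarrow> (a,b,c) \<notin> coord_pts"
  by (auto simp: coord_pts_def)

lemma limit_in_closure_Ucone:
  fixes g :: "complex \<Rightarrow> c3"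
  assumes "(g \<longlongrightarrow> u) (at 0)"
    and "eventually (\<lambda>s. Ppoly v11 v12 v21 v22 d (g s) = 0) (at 0)"
    and "\<And>s. s \<noteq> 0 \<Longrightarrow> g s \<noteq> 0 \<and> g s \<notin> coord_pts"
  shows "u \<in> closure (Ucone v11 v12 v21 v22 d)"
proof (rule Lim_in_closed_set[OF closed_closure _ _ assms(1)])
  have "eventually (\<lambda>s. s \<noteq> 0) (at (0::complex))"
    by (simp add: eventually_at_filter)
  with assms(2) have "eventually (\<lambda>s. g s \<in> Ucone v11 v12 v21 v22 d) (at 0)"
    by eventually_elim (simp add: Ucone_def Vcone_def assms(3))
  then show "eventually (\<lambda>s. g s \<in> closure (Ucone v11 v12 v21 v22 d)) (at 0)"
    by (rule eventually_mono) (rule closure_subset[THEN subsetD])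
qed simp

lemma a_swap:
  "a1 (-v21) (-v11) d = a1 v11 v21 d" "a2 (-v21) (-v11) d = a3 v11 v21 d"
  "a3 (-v21) (-v11) d = a2 v11 v21 d" "a4 (-v21) (-v11) d = a4 v11 v21 d"
  by (simp_all add: a1_def a2_def a3_def a4_def)

lemma Ppoly_swap:
  "Ppoly v11 v12 v21 v22 d (u1, u0, u2) = Ppoly (-v21) (-v22) (-v11) (-v12) d (u0, u1, u2)"
  by (simp add: Ppoly_def a_swap algebra_simps)

lemma closure_Ucone_swap:
  assumes "(u0, u1, u2) \<in> closure (Ucone (-v21) (-v22) (-v11) (-v12) d)"
  shows "(u1, u0, u2) \<in> closure (Ucone v11 v12 v21 v22 d)"
proof -
  let ?swap = "\<lambda>(u0, u1, u2). (u1, u0, u2) :: c3"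
  have "?swap ` Ucone (-v21) (-v22) (-v11) (-v12) d \<subseteq> Ucone v11 v12 v21 v22 d"
    by (auto simp: Ucone_def Vcone_def Ppoly_swap[of v11 v12 v21 v22] coord_pts_def zero_prod_def)
  then have "?swap ` closure (Ucone (-v21) (-v22) (-v11) (-v12) d) \<subseteq> closure (Ucone v11 v12 v21 v22 d)"
  proof (intro image_closure_subset)
    show "continuous_on (closure (Ucone (-v21) (-v22) (-v11) (-v12) d)) ?swap"
      by (auto simp: case_prod_unfold intro!: continuous_intros)
  qed (use closure_subset in blast)+
  then show ?thesis using assms by force
qed

lemma e1_in_closure_Ucone:
  assumes t: "t \<noteq> 0"
  shows "(t, 0, 0) \<in> closure (Ucone v11 v12 v21 v22 d)"
proof (cases "a1 v11 v21 d = 0")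
  case True
  show ?thesis
  proof (rule limit_in_closure_Ucone[where g = "\<lambda>s. (t, t * s, 0)"])
    show "((\<lambda>s. (t, t * s, 0)) \<longlongrightarrow> (t, 0, 0)) (at 0)"
      by (auto intro!: tendsto_eq_intros)
    show "eventually (\<lambda>s. Ppoly v11 v12 v21 v22 d (t, t * s, 0) = 0) (at 0)"
      using True by (simp add: Ppoly_def)
  qed (use t in \<open>auto simp: not_coord_pts zero_prod_def\<close>)
next
  case False
  define c2 where "c2 s = a1 v11 v21 d + 2 * v22 * s - a2 v11 v21 d * s^2" for s :: complex
  define c1 where "c1 s = - 2 * v12 * s * (1 + s^2)" for s :: complex
  define c0 where "c0 s = a4 v11 v21 d * s^4 + 2 * v22 * s^3 - a3 v11 v21 d * s^2" for s :: complex
  have P: "Ppoly v11 v12 v21 v22 d (t, t * y, t * s) = t^4 * (c2 s * y^2 + c1 s * y + c0 s)" for y s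
    unfolding Ppoly_def c2_def c1_def c0_def by (simp add: algebra_simps eval_nat_numeral)
  have lim: "(c2 \<longlongrightarrow> a1 v11 v21 d) (at 0)" "(c1 \<longlongrightarrow> 0) (at 0)" "(c0 \<longlongrightarrow> 0) (at 0)"
    unfolding c2_def c1_def c0_def by (auto intro!: tendsto_eq_intros)
  have "a1 v11 v21 d \<noteq> 0 \<or> (0::complex) \<noteq> 0" using False by simp
  from quadratic_root_tendsto_zero[OF lim this] obtain x where x: "(x \<longlongrightarrow> 0) (at 0)"
    and root: "eventually (\<lambda>s. c2 s * (x s)^2 + c1 s * x s + c0 s = 0) (at 0)"
    by blast
  show ?thesis
  proof (rule limit_in_closure_Ucone[where g = "\<lambda>s. (t, t * x s, t * s)"])
    show "((\<lambda>s. (t, t * x s, t * s)) \<longlongrightarrow> (t, 0, 0)) (at 0)"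
      using x by (auto intro!: tendsto_eq_intros)
    show "eventually (\<lambda>s. Ppoly v11 v12 v21 v22 d (t, t * x s, t * s) = 0) (at 0)"
      using root by eventually_elim (simp add: P)
  qed (use t in \<open>auto simp: not_coord_pts zero_prod_def\<close>)
qed

lemma e3_in_closure_Ucone_nondeg:
  assumes t: "t \<noteq> 0" and a4: "a4 v11 v21 d = 0" and nondeg: "a2 v11 v21 d \<noteq> 0 \<or> v12 \<noteq> 0"
  shows "(0, 0, t) \<in> closure (Ucone v11 v12 v21 v22 d)"
proof -
  define c2 where "c2 s = - a2 v11 v21 d + 2 * v22 * s + a1 v11 v21 d * s^2" for s :: complex
  define c1 where "c1 s = - 2 * v12 * (1 + s^2)" for s :: complex
  define c0 where "c0 s = a4 v11 v21 d + 2 * v22 * s - a3 v11 v21 d * s^2" for s :: complex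
  have P: "Ppoly v11 v12 v21 v22 d (t * s, t * y, t) = t^4 * (c2 s * y^2 + c1 s * y + c0 s)" for y s
    unfolding Ppoly_def c2_def c1_def c0_def by (simp add: algebra_simps eval_nat_numeral)
  have lim: "(c2 \<longlongrightarrow> - a2 v11 v21 d) (at 0)" "(c1 \<longlongrightarrow> - 2 * v12) (at 0)" "(c0 \<longlongrightarrow> 0) (at 0)"
    unfolding c2_def c1_def c0_def using a4 by (auto intro!: tendsto_eq_intros)
  have "- a2 v11 v21 d \<noteq> 0 \<or> - 2 * v12 \<noteq> 0" using nondeg by simp
  from quadratic_root_tendsto_zero[OF lim this] obtain x where x: "(x \<longlongrightarrow> 0) (at 0)"
    and root: "eventually (\<lambda>s. c2 s * (x s)^2 + c1 s * x s + c0 s = 0) (at 0)"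
    by blast
  show ?thesis
  proof (rule limit_in_closure_Ucone[where g = "\<lambda>s. (t * s, t * x s, t)"])
    show "((\<lambda>s. (t * s, t * x s, t)) \<longlongrightarrow> (0, 0, t)) (at 0)"
      using x by (auto intro!: tendsto_eq_intros)
    show "eventually (\<lambda>s. Ppoly v11 v12 v21 v22 d (t * s, t * x s, t) = 0) (at 0)"
      using root by eventually_elim (simp add: P)
  qed (use t in \<open>auto simp: not_coord_pts zero_prod_def\<close>)
qed

lemma e3_in_closure_Ucone:
  assumes t: "t \<noteq> 0" and a4: "a4 v11 v21 d = 0"
  shows "(0, 0, t) \<in> closure (Ucone v11 v12 v21 v22 d)"
proof -
  consider "a2 v11 v21 d \<noteq> 0 \<or> v12 \<noteq> 0" | "a3 v11 v21 d \<noteq> 0 \<or> v22 \<noteq> 0"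
    | "v12 = 0" "v22 = 0" "a3 v11 v21 d = 0"
    by blast
  then show ?thesis
  proof cases
    case 1
    then show ?thesis using e3_in_closure_Ucone_nondeg t a4 by blast
  next
    case 2
    then have "(0, 0, t) \<in> closure (Ucone (-v21) (-v22) (-v11) (-v12) d)"
      using t a4 by (intro e3_in_closure_Ucone_nondeg) (auto simp: a_swap)
    then show ?thesis by (rule closure_Ucone_swap)
  next
    case 3
    show ?thesis
    proof (rule limit_in_closure_Ucone[where g = "\<lambda>s. (t * s, 0, t)"])
      show "((\<lambda>s. (t * s, 0, t)) \<longlongrightarrow> (0, 0, t)) (at 0)"
        by (auto intro!: tendsto_eq_intros)
      show "eventually (\<lambda>s. Ppoly v11 v12 v21 v22 d (t * s, 0, t) = 0) (at 0)"
        using 3 a4 by (simp add: Ppoly_def)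
    qed (use t in \<open>auto simp: not_coord_pts zero_prod_def\<close>)
  qed
qed

lemma Vcone_subset_closure_Ucone: "Vcone v11 v12 v21 v22 d \<subseteq> closure (Ucone v11 v12 v21 v22 d)"
proof
  fix u assume u: "u \<in> Vcone v11 v12 v21 v22 d"
  show "u \<in> closure (Ucone v11 v12 v21 v22 d)"
  proof (cases "u \<in> coord_pts")
    case False
    then show ?thesis using u closure_subset unfolding Ucone_def by blast
  next
    case True
    then obtain t where t: "t \<noteq> 0" and "u = (t,0,0) \<or> u = (0,t,0) \<or> u = (0,0,t)"
      by (auto simp: coord_pts_def)
    then consider "u = (t,0,0)" | "u = (0,t,0)" | "u = (0,0,t)" by blast
    then show ?thesis
    proof cases
      case 1
      then show ?thesis using t e1_in_closure_Ucone by blast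
    next
      case 2
      then show ?thesis using t e1_in_closure_Ucone closure_Ucone_swap by blast
    next
      case 3
      then have "a4 v11 v21 d = 0" using u t by (auto simp: Vcone_def Ppoly_def)
      then show ?thesis using 3 t e3_in_closure_Ucone by blast
    qed
  qed
qed

theorem lemma6p3:
  fixes v11 v12 v21 v22 d :: complex
  assumes "(v11, v12, v21, v22, d) \<noteq> 0"
  shows "pcl (beta ` Ucone v11 v12 v21 v22 d) \<subseteq> HCF v11 v12 v21 v22 d
         \<and> beta ` Ucone v11 v12 v21 v22 d \<subseteq> HCF v11 v12 v21 v22 d
         \<and> Vcone v11 v12 v21 v22 d \<subseteq> closure (Ucone v11 v12 v21 v22 d)"
proof (intro conjI)
  let ?Z = "{z \<in> Y_zero_set. hcf_form v11 v12 v21 v22 d z = 0}"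
  have "Ucone v11 v12 v21 v22 d \<subseteq> Vcone v11 v12 v21 v22 d" by (auto simp: Ucone_def)
  from image_mono[OF this] beta_Vcone_subset
  have image: "beta ` Ucone v11 v12 v21 v22 d \<subseteq> ?Z" by (rule subset_trans)
  then have "closure (beta ` Ucone v11 v12 v21 v22 d) \<subseteq> ?Z"
    using closed_hcf_zero_set by (rule closure_minimal)
  then show "pcl (beta ` Ucone v11 v12 v21 v22 d) \<subseteq> HCF v11 v12 v21 v22 d"
    by (auto simp: pcl_def HCF_eq)
  show "beta ` Ucone v11 v12 v21 v22 d \<subseteq> HCF v11 v12 v21 v22 d"
    using image beta_nonzero by (auto simp: HCF_eq Ucone_def Vcone_def)
  show "Vcone v11 v12 v21 v22 d \<subseteq> closure (Ucone v11 v12 v21 v22 d)"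
    by (rule Vcone_subset_closure_Ucone)
qed

end
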